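(* Let $d,n,k\ge1$, fix vectors $x^{(1)},\dots,x^{(n+1)}\in\mathbb{R}^d$ and $w_\star\in\mathbb{R}^d$, and set $y^{(i)}=\langle x^{(i)},w_\star\rangle$ for $i=1,\dots,n$. Let $$Z_0=\begin{bmatrix} x^{(1)} & \cdots & x^{(n)} & x^{(n+1)}\\ y^{(1)} & \cdots & y^{(n)} & 0\end{bmatrix}\in\mathbb{R}^{(d+1)\times(n+1)},\qquad M=\begin{bmatrix} I_n & 0\\ 0& 0\end{bmatrix}\in\mathbb{R}^{(n+1)\times(n+1)}.$$ Let $A_0,\dots,A_k\in\mathbb{R}^{d\times d}$ be symmetric, and set $P_i=\begin{bmatrix}0_{d\times d}&0\\0&1\end{bmatrix}$, $Q_i=\begin{bmatrix}A_i&0\\0&0\end{bmatrix}$, and $Z_{i+1}=Z_i+\frac1n P_iZ_iM(Z_i^\top Q_iZ_i)$ for $i=0,\dots,k$. Define $R_{w_\star}(w)=\frac{1}{2n}\sum_{i=1}^n\big(w^\top x^{(i)}-w_\star^\top x^{(i)}\big)^2$. Then there exist vectors $w^{\mathrm{gd}}_0,\dots,w^{\mathrm{gd}}_{k+1}\in\mathbb{R}^d$ such that the predicted label after layer $i$ satisfies $[Z_i]_{d+1,n+1}=-\langle x^{(n+1)},w^{\mathrm{gd}}_i\rangle$ for every $i\in\{0,\dots,k+1\}$, and such that for every $i\in\{0,\dots,k\}$ they are related by the preconditioned gradient step $$w^{\mathrm{gd}}_{i+1}=w^{\mathrm{gd}}_i+A_i\nabla R_{w_\star}(w^{\mathrm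{gd}}_i).$$
   Context: $[X]_{i,j}$ denotes the $(i,j)$ entry of a matrix $X$. The map $Z\mapsto PZM(Z^\top QZ)$ is a linear (softmax-free) self-attention layer with mask $M$. *)

theory Defs
  imports Complex_Main "Jordan_Normal_Form.Matrix"
begin

text \<open>Conventions: data vectors x^(1..n+1) are given by a function xs with
  xs j for j = 1..n+1; matrices use the 0-based indexing of Jordan_Normal_Form,
  so the paper's entry [Z]_{d+1,n+1} is Z $$ (d, n).\<close>

definition Z0_mat :: "nat \<Rightarrow> nat \<Rightarrow> (nat \<Rightarrow> real vec) \<Rightarrow> real vec \<Rightarrow> real mat" where
  "Z0_mat d n xs wstar = mat (d + 1) (n + 1) (\<lambda>(r, c).
     if r < d then xs (c + 1) $ r
     else if c < n then xs (c + 1) \<bullet> wstar else 0)"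

definition M_mat :: "nat \<Rightarrow> real mat" where
  "M_mat n = four_block_mat (1\<^sub>m n) (0\<^sub>m n 1) (0\<^sub>m 1 n) (0\<^sub>m 1 1)"

definition P_mat :: "nat \<Rightarrow> real mat" where
  "P_mat d = four_block_mat (0\<^sub>m d d) (0\<^sub>m d 1) (0\<^sub>m 1 d) (1\<^sub>m 1)"

definition Q_mat :: "nat \<Rightarrow> real mat \<Rightarrow> real mat" where
  "Q_mat d A = four_block_mat A (0\<^sub>m d 1) (0\<^sub>m 1 d) (0\<^sub>m 1 1)"

definition lsa :: "real mat \<Rightarrow> real mat \<Rightarrow> real mat \<Rightarrow> real mat \<Rightarrow> real mat" where
  "lsa P Q M Z = P * Z * M * (transpose_mat Z * Q * Z)"

fun Z_layers :: "nat \<Rightarrow> nat \<Rightarrow> (nat \<Rightarrow> real vec) \<Rightarrow> real vec \<Rightarrow> (nat \<Rightarrow> real mat) \<Rightarrow> nat \<Rightarrow> real mat" where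
  "Z_layers d n xs wstar A 0 = Z0_mat d n xs wstar"
| "Z_layers d n xs wstar A (Suc i) =
     (let Z = Z_layers d n xs wstar A i
      in Z + (1 / real n) \<cdot>\<^sub>m lsa (P_mat d) (Q_mat d (A i)) (M_mat n) Z)"

definition risk :: "nat \<Rightarrow> (nat \<Rightarrow> real vec) \<Rightarrow> real vec \<Rightarrow> real vec \<Rightarrow> real" where
  "risk n xs wstar w = 1 / (2 * real n) * (\<Sum>i = 1..n. (w \<bullet> xs i - wstar \<bullet> xs i)^2)"

definition grad :: "nat \<Rightarrow> (real vec \<Rightarrow> real) \<Rightarrow> real vec \<Rightarrow> real vec" where
  "grad d f w = vec d (\<lambda>j. THE D. ((\<lambda>t. f (w + t \<cdot>\<^sub>v unit_vec d j)) has_real_derivative D) (at 0))"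

end

theory Submission imports Defs begin

(* By induction on the layer i, Z_i keeps the data x^(j) in its first d rows and
   carries the residuals y^(j) - <x^(j), w_i> in its last row (with y^(n+1) = 0), where w_i are
   the iterates of preconditioned gradient descent started at 0.  Only the last row of P Z M is
   non-zero, so a layer adds to the last row the entries
   (1/n) \<Sum>_j (y^(j) - <x^(j), w_i>) x^(j)^T A_i x^(c); by symmetry of A_i this is
   -<x^(c), A_i \<nabla>R(w_i)>, i.e. the residuals for w_i + A_i \<nabla>R(w_i). *)

lemma mat_mult_mat:
  "mat nr m f * mat m nc g = mat nr nc (\<lambda>(i, j). \<Sum>s<m. f (i, s) * (g (s, j) :: 'a :: semiring_0))"
  by (rule eq_matI) (auto simp: scalar_prod_def row_def col_def lessThan_atLeast0 intro!: sum.cong)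

lemma mat_of_entries: "Z \<in> carrier_mat nr nc \<Longrightarrow> Z = mat nr nc (\<lambda>(i, j). Z $$ (i, j))"
  by (rule eq_matI) auto

lemma P_mat_eq: "P_mat d = mat (d + 1) (d + 1) (\<lambda>(r, s). if r = d \<and> s = d then 1 else 0)"
  unfolding P_mat_def by (rule eq_matI) auto

lemma M_mat_eq: "M_mat n = mat (n + 1) (n + 1) (\<lambda>(r, s). if r = s \<and> r < n then 1 else 0)"
  unfolding M_mat_def by (rule eq_matI) auto

lemma Q_mat_eq:
  "A \<in> carrier_mat d d \<Longrightarrow>
   Q_mat d A = mat (d + 1) (d + 1) (\<lambda>(r, s). if r < d \<and> s < d then A $$ (r, s) else 0)"
  unfolding Q_mat_def by (rule eq_matI) auto

lemma transpose_mat_mat: "transpose_mat (mat nr nc f) = mat nc nr (\<lambda>(i, j). f (j, i))"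
  by (rule eq_matI) auto

lemma scalar_prod_mult_mat_vec_eq_sum:
  assumes "u \<in> carrier_vec d" "A \<in> carrier_mat d d" "v \<in> carrier_vec d"
  shows "u \<bullet> (A *\<^sub>v v) = (\<Sum>a<d. u $ a * (\<Sum>b<d. A $$ (a, b) * v $ b))"
  using assms by (simp add: scalar_prod_def row_def lessThan_atLeast0)

lemma lsa_P_Q_M_eq:
  assumes Z: "Z \<in> carrier_mat (d + 1) (n + 1)" and A: "A \<in> carrier_mat d d"
  shows "lsa (P_mat d) (Q_mat d A) (M_mat n) Z = mat (d + 1) (n + 1) (\<lambda>(r, c).
     if r = d then \<Sum>j<n. Z $$ (d, j) *
       (vec d (\<lambda>a. Z $$ (a, j)) \<bullet> (A *\<^sub>v vec d (\<lambda>b. Z $$ (b, c))))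
     else 0)"
proof -
  have PZM: "P_mat d * Z * M_mat n =
      mat (d + 1) (n + 1) (\<lambda>(r, c). if r = d \<and> c < n then Z $$ (d, c) else 0)"
    unfolding P_mat_eq M_mat_eq by (subst mat_of_entries[OF Z], unfold mat_mult_mat)
      (rule eq_matI, auto simp: if_distrib sum.delta' cong: if_cong)
  have ZQZ: "transpose_mat Z * Q_mat d A * Z = mat (n + 1) (n + 1) (\<lambda>(j, c).
      \<Sum>a<d. Z $$ (a, j) * (\<Sum>b<d. A $$ (a, b) * Z $$ (b, c)))"
    unfolding Q_mat_eq[OF A]
    by (subst (1 2) mat_of_entries[OF Z], unfold transpose_mat_mat mat_mult_mat)
      (rule eq_matI, auto simp: if_distrib sum.delta' sum_distrib_left sum_distrib_right mult_ac
        cong: if_cong, subst sum.swap, simp add: mult_ac)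
  show ?thesis
    unfolding lsa_def PZM ZQZ mat_mult_mat
    by (rule eq_matI) (auto simp: A scalar_prod_mult_mat_vec_eq_sum lessThan_Suc intro!: sum.cong)
qed

lemma scalar_prod_mult_mat_vec_lincomb:
  fixes A :: "'a :: comm_semiring_0 mat"
  assumes u: "u \<in> carrier_vec d" and A: "A \<in> carrier_mat d d"
    and v: "\<And>l. l \<in> L \<Longrightarrow> v l \<in> carrier_vec d"
  shows "u \<bullet> (A *\<^sub>v vec d (\<lambda>b. \<Sum>l\<in>L. c l * v l $ b)) = (\<Sum>l\<in>L. c l * (u \<bullet> (A *\<^sub>v v l)))"
proof -
  have "u \<bullet> (A *\<^sub>v vec d (\<lambda>b. \<Sum>l\<in>L. c l * v l $ b)) =
      (\<Sum>a<d. \<Sum>b<d. \<Sum>l\<in>L. c l * (u $ a * (A $$ (a, b) * v l $ b)))"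
    using u A by (simp add: scalar_prod_mult_mat_vec_eq_sum sum_distrib_left mult_ac)
  also have "\<dots> = (\<Sum>a<d. \<Sum>l\<in>L. \<Sum>b<d. c l * (u $ a * (A $$ (a, b) * v l $ b)))"
    by (intro sum.cong refl sum.swap)
  also have "\<dots> = (\<Sum>l\<in>L. \<Sum>a<d. \<Sum>b<d. c l * (u $ a * (A $$ (a, b) * v l $ b)))"
    by (rule sum.swap)
  also have "\<dots> = (\<Sum>l\<in>L. c l * (u \<bullet> (A *\<^sub>v v l)))"
    using u A v by (simp add: scalar_prod_mult_mat_vec_eq_sum sum_distrib_left)
  finally show ?thesis .
qed

lemma scalar_prod_mult_mat_vec_symmetric:
  fixes A :: "'a :: comm_semiring_0 mat"
  assumes "A \<in> carrier_mat d d" "transpose_mat A = A" "u \<in> carrier_vec d" "v \<in> carrier_vec d"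
  shows "u \<bullet> (A *\<^sub>v v) = v \<bullet> (A *\<^sub>v u)"
proof -
  have "u \<bullet> (A *\<^sub>v v) = (A *\<^sub>v v) \<bullet> u"
    using assms by (intro comm_scalar_prod[of _ d]) auto
  also have "\<dots> = v \<bullet> (A *\<^sub>v u)"
    using transpose_vec_mult_scalar[of A d d u v] assms by simp
  finally show ?thesis .
qed

lemma grad_eqI:
  assumes "D \<in> carrier_vec d"
    and "\<And>j. j < d \<Longrightarrow> ((\<lambda>t. f (w + t \<cdot>\<^sub>v unit_vec d j)) has_real_derivative D $ j) (at 0)"
  shows "grad d f w = D"
  unfolding grad_def using assms by (intro eq_vecI) (auto intro: DERIV_unique the_equality)

lemma scalar_prod_add_smult_unit_vec:
  fixes x :: "'a :: comm_semiring_1 vec"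
  assumes "w \<in> carrier_vec d" "x \<in> carrier_vec d" "a < d"
  shows "(w + t \<cdot>\<^sub>v unit_vec d a) \<bullet> x = w \<bullet> x + t * x $ a"
  using assms scalar_prod_left_unit[of x d a]
  by (simp add: add_scalar_prod_distrib[of _ d] smult_scalar_prod_distrib[of _ d])

lemma grad_risk:
  assumes w: "w \<in> carrier_vec d" and xs: "\<forall>l \<in> {1..n}. xs l \<in> carrier_vec d"
  shows "grad d (risk n xs wstar) w =
    vec d (\<lambda>a. \<Sum>l = 1..n. (w \<bullet> xs l - wstar \<bullet> xs l) / n * xs l $ a)"
proof (rule grad_eqI)
  fix a assume a: "a < d"
  have "risk n xs wstar (w + t \<cdot>\<^sub>v unit_vec d a) =
      1 / (2 * real n) * (\<Sum>l = 1..n. (w \<bullet> xs l - wstar \<bullet> xs l + t * xs l $ a)\<^sup>2)" for t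
    unfolding risk_def using w xs a
    by (auto simp: scalar_prod_add_smult_unit_vec algebra_simps intro!: sum.cong)
  then show "((\<lambda>t. risk n xs wstar (w + t \<cdot>\<^sub>v unit_vec d a)) has_real_derivative
      vec d (\<lambda>a. \<Sum>l = 1..n. (w \<bullet> xs l - wstar \<bullet> xs l) / n * xs l $ a) $ a) (at 0)"
    using a by (auto intro!: derivative_eq_intros simp: sum_distrib_left intro: sum.cong)
qed simp

definition prompt_mat :: "nat \<Rightarrow> nat \<Rightarrow> (nat \<Rightarrow> real vec) \<Rightarrow> real vec \<Rightarrow> real vec \<Rightarrow> real mat" where
  "prompt_mat d n xs wstar w = mat (d + 1) (n + 1) (\<lambda>(r, c).
     if r < d then xs (Suc c) $ r
     else (if c < n then xs (Suc c) \<bullet> wstar else 0) - xs (Suc c) \<bullet> w)"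

lemma Z0_mat_eq_prompt_mat:
  assumes "\<forall>j \<in> {1..n + 1}. xs j \<in> carrier_vec d"
  shows "Z0_mat d n xs wstar = prompt_mat d n xs wstar (0\<^sub>v d)"
  unfolding Z0_mat_def prompt_mat_def using assms by (intro eq_matI) auto

lemma prompt_mat_carrier: "prompt_mat d n xs wstar w \<in> carrier_mat (d + 1) (n + 1)"
  unfolding prompt_mat_def by simp

lemma prompt_mat_data_col:
  assumes "\<forall>j \<in> {1..n + 1}. xs j \<in> carrier_vec d" and "j < n + 1"
  shows "vec d (\<lambda>a. prompt_mat d n xs wstar w $$ (a, j)) = xs (Suc j)"
proof -
  have "xs (Suc j) \<in> carrier_vec d"
    using assms by auto
  then show ?thesis
    unfolding prompt_mat_def using assms(2) by (intro eq_vecI) auto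
qed

lemma lsa_prompt_mat:
  assumes xs: "\<forall>j \<in> {1..n + 1}. xs j \<in> carrier_vec d" and A: "A \<in> carrier_mat d d"
  shows "lsa (P_mat d) (Q_mat d A) (M_mat n) (prompt_mat d n xs wstar w) =
    mat (d + 1) (n + 1) (\<lambda>(r, c). if r = d then \<Sum>j<n. prompt_mat d n xs wstar w $$ (d, j) *
      (xs (Suc j) \<bullet> (A *\<^sub>v xs (Suc c))) else 0)"
proof -
  have col: "vec d (\<lambda>a. prompt_mat d n xs wstar w $$ (a, j)) = xs (Suc j)" if "j < n + 1" for j
    using prompt_mat_data_col[OF xs that] .
  show ?thesis
    unfolding lsa_P_Q_M_eq[OF prompt_mat_carrier A]
    by (rule eq_matI) (auto simp: col intro!: sum.cong)
qed

lemma lsa_layer_prompt_mat: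
  assumes xs: "\<forall>j \<in> {1..n + 1}. xs j \<in> carrier_vec d"
    and wstar: "wstar \<in> carrier_vec d" and w: "w \<in> carrier_vec d"
    and A: "A \<in> carrier_mat d d" and A_sym: "transpose_mat A = A"
  shows "prompt_mat d n xs wstar w +
      (1 / real n) \<cdot>\<^sub>m lsa (P_mat d) (Q_mat d A) (M_mat n) (prompt_mat d n xs wstar w) =
    prompt_mat d n xs wstar (w + A *\<^sub>v grad d (risk n xs wstar) w)"
proof -
  define g where "g = grad d (risk n xs wstar) w"
  have g: "g = vec d (\<lambda>b. \<Sum>l = 1..n. (w \<bullet> xs l - wstar \<bullet> xs l) / n * xs l $ b)"
    unfolding g_def using w xs by (intro grad_risk) auto
  have label_step: "xs (Suc c) \<bullet> (A *\<^sub>v g) =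
      - (1 / n) * (\<Sum>j<n. (xs (Suc j) \<bullet> wstar - xs (Suc j) \<bullet> w) *
        (xs (Suc j) \<bullet> (A *\<^sub>v xs (Suc c))))" if c: "c < n + 1" for c
  proof -
    have "xs (Suc c) \<bullet> (A *\<^sub>v g) =
        (\<Sum>l = 1..n. (w \<bullet> xs l - wstar \<bullet> xs l) / n * (xs (Suc c) \<bullet> (A *\<^sub>v xs l)))"
      unfolding g using c xs A by (intro scalar_prod_mult_mat_vec_lincomb) auto
    also have "\<dots> = (\<Sum>l = 1..n. (w \<bullet> xs l - wstar \<bullet> xs l) / n * (xs l \<bullet> (A *\<^sub>v xs (Suc c))))"
      using c xs by (intro sum.cong refl) (simp add: scalar_prod_mult_mat_vec_symmetric[OF A A_sym])
    also have "\<dots> = (\<Sum>j<n. (w \<bullet> xs (Suc j) - wstar \<bullet> xs (Suc j)) / n *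
        (xs (Suc j) \<bullet> (A *\<^sub>v xs (Suc c))))"
      by (subst sum_bounds_lt_plus1[symmetric]) simp
    also have "\<dots> = - (1 / n) * (\<Sum>j<n. (xs (Suc j) \<bullet> wstar - xs (Suc j) \<bullet> w) *
        (xs (Suc j) \<bullet> (A *\<^sub>v xs (Suc c))))"
      using xs w wstar
      by (auto simp: sum_distrib_left comm_scalar_prod[of _ d] field_simps intro!: sum.cong)
    finally show ?thesis .
  qed
  have "xs (Suc c) \<bullet> (w + A *\<^sub>v g) = xs (Suc c) \<bullet> w + xs (Suc c) \<bullet> (A *\<^sub>v g)"
    if "c < n + 1" for c
    using that xs w A by (intro scalar_prod_add_distrib[of _ d]) (auto simp: g_def grad_def)
  then show ?thesis
    unfolding lsa_prompt_mat[OF xs A] g_def[symmetric]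
    by (intro eq_matI) (auto simp: prompt_mat_def[of d n xs wstar] label_step)
qed

fun precond_gd :: "nat \<Rightarrow> (real vec \<Rightarrow> real) \<Rightarrow> (nat \<Rightarrow> real mat) \<Rightarrow> nat \<Rightarrow> real vec" where
  "precond_gd d f A 0 = 0\<^sub>v d"
| "precond_gd d f A (Suc i) = precond_gd d f A i + A i *\<^sub>v grad d f (precond_gd d f A i)"

lemma precond_gd_carrier:
  assumes "\<And>i. i \<le> k \<Longrightarrow> A i \<in> carrier_mat d d" and "i \<le> k + 1"
  shows "precond_gd d f A i \<in> carrier_vec d"
  using assms(2)
proof (induction i)
  case (Suc i)
  then show ?case
    using assms(1)[of i] by (auto simp: grad_def)
qed simp

lemma Z_layers_eq_prompt_mat:
  assumes xs: "\<forall>j \<in> {1..n + 1}. xs j \<in> carrier_vec d" and wstar: "wstar \<in> carrier_vec d"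
    and A: "\<And>i. i \<le> k \<Longrightarrow> A i \<in> carrier_mat d d"
    and A_sym: "\<And>i. i \<le> k \<Longrightarrow> transpose_mat (A i) = A i"
  shows "i \<le> k + 1 \<Longrightarrow>
    Z_layers d n xs wstar A i = prompt_mat d n xs wstar (precond_gd d (risk n xs wstar) A i)"
proof (induction i)
  case 0
  show ?case
    by (simp add: Z0_mat_eq_prompt_mat[OF xs])
next
  case (Suc i)
  then have "i \<le> k" "i \<le> k + 1"
    by simp_all
  then show ?case
    using Suc.IH lsa_layer_prompt_mat[OF xs wstar precond_gd_carrier[OF A] A A_sym]
    by (simp add: Let_def)
qed

theorem lemma1:
  fixes d n k :: nat and xs :: "nat \<Rightarrow> real vec" and wstar :: "real vec"
    and A :: "nat \<Rightarrow> real mat"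
  assumes "d \<ge> 1" and "n \<ge> 1" and "k \<ge> 1"
    and "\<And>j. j \<in> {1..n+1} \<Longrightarrow> xs j \<in> carrier_vec d"
    and "wstar \<in> carrier_vec d"
    and "\<And>i. i \<le> k \<Longrightarrow> A i \<in> carrier_mat d d"
    and "\<And>i. i \<le> k \<Longrightarrow> transpose_mat (A i) = A i"
  shows "\<exists>wgd :: nat \<Rightarrow> real vec.
           (\<forall>i \<le> k + 1. wgd i \<in> carrier_vec d \<and>
              Z_layers d n xs wstar A i $$ (d, n) = - (xs (n + 1) \<bullet> wgd i)) \<and>
           (\<forall>i \<le> k. wgd (Suc i) = wgd i + A i *\<^sub>v grad d (risk n xs wstar) (wgd i))"
proof (intro exI[of _ "precond_gd d (risk n xs wstar) A"] conjI allI impI)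
  have xs: "\<forall>j \<in> {1..n + 1}. xs j \<in> carrier_vec d"
    using assms(4) by blast
  fix i assume "i \<le> k + 1"
  then show "precond_gd d (risk n xs wstar) A i \<in> carrier_vec d"
    using precond_gd_carrier assms(6) by blast
  show "Z_layers d n xs wstar A i $$ (d, n) = - (xs (n + 1) \<bullet> precond_gd d (risk n xs wstar) A i)"
    using Z_layers_eq_prompt_mat[OF xs assms(5-7) \<open>i \<le> k + 1\<close>] by (simp add: prompt_mat_def)
qed simp

end
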